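(* Let $\mu>1$, $\gamma=\mu\gamma^N_1$, and let $(\rho_k)_{k\ge1}$ be an increasing positive sequence with $K_{4/3}<\infty$. There exist constants $A_1<\infty$ and $\delta_0>0$ such that for all $N\ge3$, all $0<\delta<\delta_0$ and all $z\in C_\delta$, $$\big|\widetilde G_N(z)-F_0(z)\big|\le A_1\delta^4,\qquad\text{where } F_0(z)=\tfrac12\sum_{k=0}^{N-1}\lambda_{k,N}|z_k|^2.$$
   Context: Indices modulo $N$; $F_{\gamma,N}(x)=\sum_{i=0}^{N-1}(\tfrac14x_i^4-\tfrac12x_i^2)+\tfrac\gamma4\sum_{i=0}^{N-1}(x_i-x_{i+1})^2$; $\gamma^N_1=\frac1{2\sin^2(\pi/N)}$; $G_N=N^{-1}F_{\gamma,N}$; $\lambda_{k,N}=-1+2\gamma\sin^2(k\pi/N)$. $\omega=e^{2\pi i/N}$; $\widehat{\mathbb{R}}^N=\{z\in\mathbb{C}^N:z_k=\overline{z_{N-k}}\}$; $x_j(Nz)=\sum_{k=0}^{N-1}\omega^{jk}z_k$; $\widetilde G_N(z)=G_N(x(Nz))$, which equals $\tfrac12\sum_k\lambda_{k,N}|z_k|^2+\frac1{4N}\|x(Nz)\|_4^4$. Given increasing positive $(\rho_k)_{k\ge1}$: $r_{0,N}=1$, $r_{k,N}=r_{N-k,N}=\rho_k$ ($1\le k\le\lfloor N/2\rfloor$), $K_p=(\sum_{k\ge1}\rho_k^p/k^p)^{1/p}$, $C_\delta=\{z\in\widehat{\mathbb{R}}^N:|z_k|\le\delta r_{k,N}/\sqrt{|\lambda_{k,N}|},\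 0\le k\le N-1\}$. *)

theory Defs
  imports "HOL-Analysis.Analysis"
begin

text \<open>Vectors in R^N / C^N are functions on nat, only indices 0..N-1 matter; indices mod N.\<close>

definition Fgam :: "real \<Rightarrow> nat \<Rightarrow> (nat \<Rightarrow> real) \<Rightarrow> real" where
  "Fgam \<gamma> N x = (\<Sum>i<N. x i ^ 4 / 4 - x i ^ 2 / 2)
                  + \<gamma> / 4 * (\<Sum>i<N. (x i - x ((i + 1) mod N)) ^ 2)"

definition gamma1 :: "nat \<Rightarrow> real" where
  "gamma1 N = 1 / (2 * (sin (pi / real N)) ^ 2)"

definition GN :: "real \<Rightarrow> nat \<Rightarrow> (nat \<Rightarrow> real) \<Rightarrow> real" where
  "GN \<gamma> N x = Fgam \<gamma> N x / real N"

definition lam :: "real \<Rightarrow> nat \<Rightarrow> nat \<Rightarrow> real" where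
  "lam \<gamma> N k = -1 + 2 * \<gamma> * (sin (real k * pi / real N)) ^ 2"

definition omega :: "nat \<Rightarrow> complex" where
  "omega N = cis (2 * pi / real N)"

text \<open>x_j(Nz) = sum_k omega^(jk) z_k; real for z in hatR N, so we take the real part.\<close>
definition xvec :: "nat \<Rightarrow> (nat \<Rightarrow> complex) \<Rightarrow> nat \<Rightarrow> real" where
  "xvec N z j = Re (\<Sum>k<N. omega N ^ (j * k) * z k)"

definition Gtilde :: "real \<Rightarrow> nat \<Rightarrow> (nat \<Rightarrow> complex) \<Rightarrow> real" where
  "Gtilde \<gamma> N z = GN \<gamma> N (xvec N z)"

definition hatR :: "nat \<Rightarrow> (nat \<Rightarrow> complex) set" where
  "hatR N = {z. \<forall>k<N. z k = cnj (z ((N - k) mod N))}"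

definition rr :: "(nat \<Rightarrow> real) \<Rightarrow> nat \<Rightarrow> nat \<Rightarrow> real" where
  "rr \<rho> N k = (if k = 0 then 1 else if k \<le> N div 2 then \<rho> k else \<rho> (N - k))"

definition Kp :: "(nat \<Rightarrow> real) \<Rightarrow> real \<Rightarrow> real" where
  "Kp \<rho> p = (\<Sum>k. (\<rho> (Suc k) / real (Suc k)) powr p) powr (1 / p)"

definition Cdelta :: "real \<Rightarrow> (nat \<Rightarrow> real) \<Rightarrow> nat \<Rightarrow> real \<Rightarrow> (nat \<Rightarrow> complex) set" where
  "Cdelta \<gamma> \<rho> N \<delta> = {z \<in> hatR N. \<forall>k<N. cmod (z k) \<le> \<delta> * rr \<rho> N k / sqrt \<bar>lam \<gamma> N k\<bar>}"

definition F0 :: "real \<Rightarrow> nat \<Rightarrow> (nat \<Rightarrow> complex) \<Rightarrow> real" where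
  "F0 \<gamma> N z = (1/2) * (\<Sum>k<N. lam \<gamma> N k * (cmod (z k)) ^ 2)"

end

theory Submission
  imports Defs
begin

(*
  Writing x = x(Nz) as the discrete Fourier
  transform (DFT) of z, the quadratic part of G_N diagonalises by Parseval, and the
  quartic part is, again by Parseval, the l^2-energy of the cyclic convolution z * z,
  because x_j^2 is the DFT of z * z.  Hence for z in the real-symmetric space
      G~_N(z) - F_0(z) = 1/4 * sum_m |(z * z)_m|^2.
  A Young-type inequality bounds this energy by (sum_k |z_k|^(4/3))^3.  On C_delta we
  have |z_k| <= delta r_k / sqrt |lambda_k|, and the eigenvalue estimate
  lambda_k >= (mu - 1) k^2 / 9 for 1 <= k <= N/2 turns sum_k |z_k|^(4/3) into at most
  delta^(4/3) (1 + 2 (3/sqrt(mu-1))^(4/3) K_{4/3}^(4/3)), uniformly in N.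
*)

definition dft :: "nat \<Rightarrow> (nat \<Rightarrow> complex) \<Rightarrow> nat \<Rightarrow> complex" where
  "dft N w j = (\<Sum>k<N. omega N ^ (j * k) * w k)"

definition cconv :: "nat \<Rightarrow> (nat \<Rightarrow> complex) \<Rightarrow> nat \<Rightarrow> complex" where
  "cconv N w m = (\<Sum>k<N. w k * w ((m + N - k) mod N))"

lemma omega_pow_N:
  assumes "0 < N" shows "omega N ^ N = 1"
proof -
  have "omega N ^ N = cis (real N * (2 * pi / real N))" by (simp add: omega_def Complex.DeMoivre)
  then show ?thesis using assms by simp
qed

lemma omega_pow_mod: "0 < N \<Longrightarrow> omega N ^ n = omega N ^ (n mod N)"
  by (metis omega_pow_N div_mult_mod_eq power_add power_mult power_one mult.commute mult_1)

lemma omega_pow_cong: "0 < N \<Longrightarrow> a mod N = b mod N \<Longrightarrow> omega N ^ a = omega N ^ b"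
  by (metis omega_pow_mod)

lemma norm_omega_pow [simp]: "cmod (omega N ^ n) = 1"
  by (simp add: omega_def norm_power)

lemma omega_pow_eq_1_iff: "0 < N \<Longrightarrow> omega N ^ n = 1 \<longleftrightarrow> N dvd n"
proof
  assume N: "0 < N" and "omega N ^ n = 1"
  then have "cis (real n * (2 * pi / real N)) = 1" by (simp add: omega_def Complex.DeMoivre)
  then have "cos (real n * (2 * pi / real N)) = 1"
    by (metis cis.sel(1) one_complex.sel(1))
  then obtain m :: int where "real n * (2 * pi / real N) = real_of_int m * 2 * pi"
    using cos_one_2pi_int by blast
  then have "real n = real_of_int m * real N" using N by (simp add: field_simps)
  then have "int n = m * int N" by (metis of_int_eq_iff of_int_mult of_int_of_nat_eq)
  then show "N dvd n" by (metis dvd_triv_right int_dvd_int_iff)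
next
  assume "0 < N" "N dvd n"
  then show "omega N ^ n = 1" using omega_pow_mod[of N n] by simp
qed

lemma sum_omega_pow:
  assumes N: "0 < N"
  shows "(\<Sum>j<N. omega N ^ (j * n)) = (if N dvd n then of_nat N else 0)"
proof (cases "N dvd n")
  case True
  then have "\<And>j. omega N ^ (j * n) = 1" using N by (simp add: omega_pow_eq_1_iff)
  then show ?thesis using True by simp
next
  case False
  have "(omega N ^ n) ^ N = 1" by (metis N omega_pow_N power_mult mult.commute power_one)
  then have "(\<Sum>j<N. (omega N ^ n) ^ j) = 0"
    using False N by (simp add: sum_gp_strict omega_pow_eq_1_iff)
  then show ?thesis using False by (simp add: power_mult[symmetric] mult.commute)
qed

lemma cnj_omega_pow:
  assumes N: "0 < N" and nm: "(n + m) mod N = 0"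
  shows "cnj (omega N ^ n) = omega N ^ m"
proof -
  have inv: "cnj (omega N ^ n) * omega N ^ n = 1"
    by (metis complex_norm_square mult.commute norm_omega_pow of_real_1 power_one)
  have "omega N ^ n * omega N ^ m = 1"
    using omega_pow_cong[OF N, of "n + m" 0] nm by (simp add: power_add)
  then have "cnj (omega N ^ n) = cnj (omega N ^ n) * (omega N ^ n * omega N ^ m)" by simp
  also have "\<dots> = omega N ^ m" using inv by (simp only: mult.assoc[symmetric]) simp
  finally show ?thesis .
qed

lemma dvd_add_diff_iff:
  fixes k l N :: nat
  assumes "k < N" "l < N"
  shows "N dvd k + N - l \<longleftrightarrow> k = l"
proof (cases k l rule: linorder_cases)
  case less
  then show ?thesis using assms by (simp add: nat_dvd_not_less)
next
  case equal
  then show ?thesis by simp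
next
  case greater
  then have "N dvd k + N - l \<longleftrightarrow> N dvd k - l"
    by (metis add_diff_assoc2 dvd_add_triv_right_iff less_imp_le)
  then show ?thesis using greater assms by (simp add: nat_dvd_not_less)
qed

lemma parseval:
  assumes N: "0 < N"
  shows "(\<Sum>j<N. (cmod (dft N w j))\<^sup>2) = real N * (\<Sum>k<N. (cmod (w k))\<^sup>2)"
proof -
  have cnj_pow: "cnj (omega N ^ (j * l)) = omega N ^ (j * (N - l))" if "l < N" for j l
  proof (rule cnj_omega_pow[OF N])
    have "j * l + j * (N - l) = j * N" using that by (simp add: diff_mult_distrib2)
    then show "(j * l + j * (N - l)) mod N = 0" by simp
  qed
  have "complex_of_real (\<Sum>j<N. (cmod (dft N w j))\<^sup>2) = (\<Sum>j<N. dft N w j * cnj (dft N w j))"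
    by (simp only: of_real_sum complex_norm_square)
  also have "\<dots> = (\<Sum>j<N. \<Sum>k<N. \<Sum>l<N. w k * cnj (w l) * omega N ^ (j * (k + (N - l))))"
    unfolding dft_def cnj_sum complex_cnj_mult sum_product
  proof (intro sum.cong refl)
    fix j k l assume "l \<in> {..<N}"
    then have e: "omega N ^ (j * k) * cnj (omega N ^ (j * l)) = omega N ^ (j * (k + (N - l)))"
      by (simp only: cnj_pow lessThan_iff power_add distrib_left)
    have "omega N ^ (j * k) * w k * (cnj (omega N ^ (j * l)) * cnj (w l))
        = w k * cnj (w l) * (omega N ^ (j * k) * cnj (omega N ^ (j * l)))"
      by (simp only: ac_simps)
    then show "omega N ^ (j * k) * w k * (cnj (omega N ^ (j * l)) * cnj (w l))
             = w k * cnj (w l) * omega N ^ (j * (k + (N - l)))"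
      by (simp only: e)
  qed
  also have "\<dots> = (\<Sum>k<N. \<Sum>j<N. \<Sum>l<N. w k * cnj (w l) * omega N ^ (j * (k + (N - l))))"
    by (rule sum.swap)
  also have "\<dots> = (\<Sum>k<N. \<Sum>l<N. w k * cnj (w l) * (\<Sum>j<N. omega N ^ (j * (k + (N - l)))))"
    unfolding sum_distrib_left by (rule sum.cong[OF refl], rule sum.swap)
  also have "\<dots> = (\<Sum>k<N. \<Sum>l<N. if l = k then w k * cnj (w k) * of_nat N else 0)"
    by (intro sum.cong refl) (auto simp: sum_omega_pow[OF N] dvd_add_diff_iff)
  also have "\<dots> = (\<Sum>k<N. w k * cnj (w k) * of_nat N)"
    by simp
  also have "\<dots> = complex_of_real (real N * (\<Sum>k<N. (cmod (w k))\<^sup>2))"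
    by (simp only: of_real_mult of_real_sum of_real_of_nat_eq complex_norm_square
        sum_distrib_left mult_ac)
  finally show ?thesis using of_real_eq_iff by blast
qed

lemma reflect_mod_involutive:
  fixes k m N :: nat
  assumes k: "k < N"
  shows "(m + N - (m + N - k) mod N) mod N = k"
proof -
  have le: "(m + N - k) mod N \<le> m + N" using mod_less_eq_dividend[of "m + N - k" N] by linarith
  have r: "int ((m + N - k) mod N) = (int m + int N - int k) mod int N"
    using k by (simp add: zmod_int of_nat_diff)
  have "int ((m + N - (m + N - k) mod N) mod N) = (int m + int N - int ((m + N - k) mod N)) mod int N"
    using le by (simp add: zmod_int of_nat_diff)
  also have "\<dots> = (int m + int N - (int m + int N - int k)) mod int N"
    by (simp only: r mod_diff_right_eq)
  also have "\<dots> = int k" using k by simp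
  finally show ?thesis by linarith
qed

lemma sum_cyclic_reflect: "(\<Sum>k<N. f ((m + N - k) mod N)) = (\<Sum>k<(N::nat). f k)"
  by (rule sum.reindex_bij_witness[where i="\<lambda>k. (m + N - k) mod N" and j="\<lambda>k. (m + N - k) mod N"])
     (auto simp: reflect_mod_involutive)

lemma sum_cyclic_shift:
  fixes k N :: nat
  assumes k: "k < N"
  shows "(\<Sum>m<N. f ((m + N - k) mod N)) = (\<Sum>l<N. f l)"
proof (rule sum.reindex_bij_witness[where i="\<lambda>l. (l + k) mod N" and j="\<lambda>m. (m + N - k) mod N"])
  fix m assume "m \<in> {..<N}"
  have "((m + N - k) mod N + k) mod N = (m + N - k + k) mod N" by (rule mod_add_left_eq)
  then show "((m + N - k) mod N + k) mod N = m" using k \<open>m \<in> {..<N}\<close> by simp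
next
  fix l assume l: "l \<in> {..<N}"
  have "(l + k) mod N + N - k = (l + k) mod N + (N - k)" using k by simp
  then have "((l + k) mod N + N - k) mod N = (l + k + (N - k)) mod N" by (metis mod_add_left_eq)
  then show "((l + k) mod N + N - k) mod N = l" using k l by simp
qed (use k in auto)

lemma cnj_dft_hatR:
  assumes N: "0 < N" and z: "z \<in> hatR N"
  shows "cnj (dft N z j) = dft N z j"
proof -
  have "cnj (dft N z j) = (\<Sum>k<N. omega N ^ (j * ((N - k) mod N)) * z ((N - k) mod N))"
    unfolding dft_def cnj_sum complex_cnj_mult
  proof (intro sum.cong refl)
    fix k assume k: "k \<in> {..<N}"
    have "(j * k + j * ((N - k) mod N)) mod N = (j * k + j * (N - k)) mod N"
      by (metis mod_add_right_eq mod_mult_right_eq)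
    also have "j * k + j * (N - k) = j * N" using k by (simp add: diff_mult_distrib2)
    finally have "cnj (omega N ^ (j * k)) = omega N ^ (j * ((N - k) mod N))"
      by (intro cnj_omega_pow[OF N]) simp
    moreover have "z k = cnj (z ((N - k) mod N))" using z k unfolding hatR_def by blast
    then have "cnj (z k) = z ((N - k) mod N)" by simp
    ultimately show "cnj (omega N ^ (j * k)) * cnj (z k)
        = omega N ^ (j * ((N - k) mod N)) * z ((N - k) mod N)" by simp
  qed
  also have "\<dots> = dft N z j"
    using sum_cyclic_reflect[of "\<lambda>k. omega N ^ (j * k) * z k" 0 N] by (simp add: dft_def)
  finally show ?thesis .
qed

lemma xvec_eq_dft:
  assumes "0 < N" "z \<in> hatR N"
  shows "complex_of_real (xvec N z j) = dft N z j"
proof -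
  have "Im (dft N z j) = 0" using cnj_dft_hatR[OF assms, of j] by (simp add: complex_eq_iff)
  then show ?thesis by (simp add: xvec_def dft_def complex_eq_iff)
qed

lemma norm_one_minus_omega_pow: "(cmod (1 - omega N ^ k))\<^sup>2 = 4 * (sin (real k * pi / real N))\<^sup>2"
proof -
  define t where "t = real k * pi / real N"
  have "real k * (2 * pi / real N) = 2 * t" by (simp add: t_def)
  then have "omega N ^ k = cis (2 * t)" by (simp only: omega_def Complex.DeMoivre)
  then have "(cmod (1 - omega N ^ k))\<^sup>2 = (1 - cos (2 * t))\<^sup>2 + (sin (2 * t))\<^sup>2"
    by (simp add: cmod_power2)
  also have "\<dots> = 2 - 2 * cos (2 * t)"
    using sin_cos_squared_add[of "2 * t"] by (simp add: power2_eq_square algebra_simps)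
  also have "\<dots> = 4 * (sin t)\<^sup>2" by (simp add: cos_double_sin)
  finally show ?thesis by (simp add: t_def)
qed

lemma dft_diff_shift:
  assumes N: "0 < N"
  shows "dft N w j - dft N w ((j + 1) mod N) = dft N (\<lambda>k. (1 - omega N ^ k) * w k) j"
  unfolding dft_def sum_subtractf[symmetric]
proof (intro sum.cong refl)
  fix k
  have "omega N ^ (((j + 1) mod N) * k) = omega N ^ ((j + 1) * k)"
    by (rule omega_pow_cong[OF N]) (simp add: mod_mult_left_eq)
  then show "omega N ^ (j * k) * w k - omega N ^ ((j + 1) mod N * k) * w k
      = omega N ^ (j * k) * ((1 - omega N ^ k) * w k)"
    by (simp add: power_add algebra_simps)
qed

lemma dft_square:
  assumes N: "0 < N"
  shows "(dft N w j)\<^sup>2 = dft N (cconv N w) j"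
proof -
  have "(dft N w j)\<^sup>2
      = (\<Sum>k<N. \<Sum>m<N. (omega N ^ (j * k) * w k) * (omega N ^ (j * ((m + N - k) mod N)) * w ((m + N - k) mod N)))"
    unfolding dft_def power2_eq_square sum_product
    by (rule sum.cong[OF refl], rule sum_cyclic_shift[symmetric]) simp
  also have "\<dots> = (\<Sum>k<N. \<Sum>m<N. omega N ^ (j * m) * (w k * w ((m + N - k) mod N)))"
  proof (intro sum.cong refl)
    fix k m assume k: "k \<in> {..<N}"
    have "(j * k + j * ((m + N - k) mod N)) mod N = (j * k + j * (m + N - k)) mod N"
      by (metis mod_add_right_eq mod_mult_right_eq)
    also have "j * k + j * (m + N - k) = j * (m + N - k + k)" by (simp only: distrib_left add.commute)
    also have "\<dots> = j * m + j * N" using k by (simp add: distrib_left)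
    finally have "omega N ^ (j * k) * omega N ^ (j * ((m + N - k) mod N)) = omega N ^ (j * m)"
      unfolding power_add[symmetric] by (intro omega_pow_cong[OF N]) simp
    then show "(omega N ^ (j * k) * w k) * (omega N ^ (j * ((m + N - k) mod N)) * w ((m + N - k) mod N))
        = omega N ^ (j * m) * (w k * w ((m + N - k) mod N))"
      by (simp only: ac_simps)
  qed
  also have "\<dots> = dft N (cconv N w) j"
    unfolding dft_def cconv_def sum_distrib_left by (rule sum.swap)
  finally show ?thesis .
qed

lemma sum_xvec_sq:
  assumes N: "0 < N" and z: "z \<in> hatR N"
  shows "(\<Sum>j<N. (xvec N z j)\<^sup>2) = real N * (\<Sum>k<N. (cmod (z k))\<^sup>2)"
proof -
  have "(xvec N z j)\<^sup>2 = (cmod (dft N z j))\<^sup>2" for j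
    by (simp flip: xvec_eq_dft[OF N z])
  then show ?thesis by (simp add: parseval[OF N])
qed

lemma sum_xvec_diff_sq:
  assumes N: "0 < N" and z: "z \<in> hatR N"
  shows "(\<Sum>j<N. (xvec N z j - xvec N z ((j + 1) mod N))\<^sup>2)
       = real N * (\<Sum>k<N. 4 * (sin (real k * pi / real N))\<^sup>2 * (cmod (z k))\<^sup>2)"
proof -
  have "(xvec N z j - xvec N z ((j + 1) mod N))\<^sup>2
      = (cmod (dft N (\<lambda>k. (1 - omega N ^ k) * z k) j))\<^sup>2" for j
  proof -
    have "complex_of_real (xvec N z j - xvec N z ((j + 1) mod N))
        = dft N (\<lambda>k. (1 - omega N ^ k) * z k) j"
      using dft_diff_shift[OF N, of z j] by (simp only: of_real_diff xvec_eq_dft[OF N z])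
    then show ?thesis by (metis norm_of_real power2_abs)
  qed
  then show ?thesis
    by (simp add: parseval[OF N] norm_mult power_mult_distrib norm_one_minus_omega_pow)
qed

lemma sum_xvec_pow4:
  assumes N: "0 < N" and z: "z \<in> hatR N"
  shows "(\<Sum>j<N. (xvec N z j) ^ 4) = real N * (\<Sum>m<N. (cmod (cconv N z m))\<^sup>2)"
proof -
  have "(xvec N z j) ^ 4 = (cmod (dft N (cconv N z) j))\<^sup>2" for j
  proof -
    have "(xvec N z j) ^ 4 = (cmod (complex_of_real ((xvec N z j)\<^sup>2)))\<^sup>2"
      by (simp only: norm_of_real power2_abs flip: power_mult) simp
    also have "complex_of_real ((xvec N z j)\<^sup>2) = dft N (cconv N z) j"
      by (simp add: xvec_eq_dft[OF N z] dft_square[OF N])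
    finally show ?thesis .
  qed
  then show ?thesis by (simp add: parseval[OF N])
qed

lemma Gtilde_minus_F0:
  assumes N: "0 < N" and z: "z \<in> hatR N"
  shows "Gtilde \<gamma> N z - F0 \<gamma> N z = (\<Sum>m<N. (cmod (cconv N z m))\<^sup>2) / 4"
proof -
  define S2 where "S2 = (\<Sum>k<N. (cmod (z k))\<^sup>2)"
  define D2 where "D2 = (\<Sum>k<N. 4 * (sin (real k * pi / real N))\<^sup>2 * (cmod (z k))\<^sup>2)"
  define Q where "Q = (\<Sum>m<N. (cmod (cconv N z m))\<^sup>2)"
  have "Gtilde \<gamma> N z = ((\<Sum>j<N. (xvec N z j) ^ 4) / 4 - (\<Sum>j<N. (xvec N z j)\<^sup>2) / 2
       + \<gamma> / 4 * (\<Sum>j<N. (xvec N z j - xvec N z ((j + 1) mod N))\<^sup>2)) / real N"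
    by (simp add: Gtilde_def GN_def Fgam_def sum_subtractf sum_divide_distrib)
  also have "\<dots> = (real N * Q / 4 - real N * S2 / 2 + \<gamma> / 4 * (real N * D2)) / real N"
    unfolding Q_def S2_def D2_def
    by (simp only: sum_xvec_pow4[OF N z] sum_xvec_sq[OF N z] sum_xvec_diff_sq[OF N z])
  also have "\<dots> = Q / 4 - S2 / 2 + \<gamma> / 4 * D2"
    using N by (simp add: field_simps)
  finally have G: "Gtilde \<gamma> N z = Q / 4 - S2 / 2 + \<gamma> / 4 * D2" .
  have "(\<Sum>k<N. lam \<gamma> N k * (cmod (z k))\<^sup>2)
      = (\<Sum>k<N. \<gamma> / 2 * (4 * (sin (real k * pi / real N))\<^sup>2 * (cmod (z k))\<^sup>2) - (cmod (z k))\<^sup>2)"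
    by (intro sum.cong refl) (simp add: lam_def algebra_simps)
  also have "\<dots> = \<gamma> / 2 * D2 - S2"
    by (simp only: sum_subtractf sum_distrib_left D2_def S2_def)
  finally have "F0 \<gamma> N z = \<gamma> / 4 * D2 - S2 / 2" by (simp add: F0_def)
  then show ?thesis using G by (simp add: Q_def)
qed

lemma conv_cubes_pointwise:
  fixes t :: "nat \<Rightarrow> real"
  assumes t: "\<And>k. 0 \<le> t k"
  shows "(\<Sum>k<N. t k ^ 3 * t ((m + N - k) mod N) ^ 3)\<^sup>2
       \<le> (\<Sum>k<N. t k ^ 4) * (\<Sum>k<N. t k ^ 4 * t ((m + N - k) mod N) ^ 4)"
proof -
  define S where "S = (\<Sum>k<N. t k ^ 4)"
  define p where "p k = t k * t ((m + N - k) mod N)" for k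
  have pow4: "(a\<^sup>2)\<^sup>2 = a ^ 4" for a :: real by simp
  have "(\<Sum>k<N. (p k)\<^sup>2)\<^sup>2 \<le> (\<Sum>k<N. ((t k)\<^sup>2)\<^sup>2) * (\<Sum>k<N. ((t ((m + N - k) mod N))\<^sup>2)\<^sup>2)"
    unfolding p_def power_mult_distrib by (rule Cauchy_Schwarz_ineq_sum)
  also have "\<dots> = S\<^sup>2"
    unfolding pow4 S_def sum_cyclic_reflect[of "\<lambda>k. t k ^ 4" m N] by (rule power2_eq_square[symmetric])
  finally have "(\<Sum>k<N. (p k)\<^sup>2)\<^sup>2 \<le> S\<^sup>2" .
  moreover have "0 \<le> S" unfolding S_def by (intro sum_nonneg) simp
  ultimately have p2: "(\<Sum>k<N. (p k)\<^sup>2) \<le> S" by (rule power2_le_imp_le)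
  have p4: "(\<Sum>k<N. ((p k)\<^sup>2)\<^sup>2) = (\<Sum>k<N. t k ^ 4 * t ((m + N - k) mod N) ^ 4)"
    unfolding pow4 p_def power_mult_distrib ..
  have "(\<Sum>k<N. t k ^ 3 * t ((m + N - k) mod N) ^ 3)\<^sup>2 = (\<Sum>k<N. (p k)\<^sup>2 * p k)\<^sup>2"
    by (simp add: p_def power_mult_distrib power2_eq_square power3_eq_cube mult_ac)
  also have "\<dots> \<le> (\<Sum>k<N. ((p k)\<^sup>2)\<^sup>2) * (\<Sum>k<N. (p k)\<^sup>2)"
    by (rule Cauchy_Schwarz_ineq_sum)
  also have "\<dots> \<le> (\<Sum>k<N. ((p k)\<^sup>2)\<^sup>2) * S"
    using p2 by (intro mult_left_mono sum_nonneg) auto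
  finally show ?thesis by (simp only: p4 S_def mult.commute)
qed

lemma cyclic_young_cubes:
  fixes t :: "nat \<Rightarrow> real"
  assumes t: "\<And>k. 0 \<le> t k"
  shows "(\<Sum>m<N. (\<Sum>k<N. t k ^ 3 * t ((m + N - k) mod N) ^ 3)\<^sup>2) \<le> (\<Sum>k<N. t k ^ 4) ^ 3"
proof -
  define S where "S = (\<Sum>k<N. t k ^ 4)"
  have "(\<Sum>m<N. (\<Sum>k<N. t k ^ 3 * t ((m + N - k) mod N) ^ 3)\<^sup>2)
      \<le> (\<Sum>m<N. S * (\<Sum>k<N. t k ^ 4 * t ((m + N - k) mod N) ^ 4))"
    unfolding S_def by (intro sum_mono conv_cubes_pointwise t)
  also have "\<dots> = S * (\<Sum>k<N. t k ^ 4 * (\<Sum>m<N. t ((m + N - k) mod N) ^ 4))"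
    unfolding sum_distrib_left by (rule sum.swap)
  also have "\<dots> = S * (\<Sum>k<N. t k ^ 4 * S)"
  proof -
    have "(\<Sum>m<N. t ((m + N - k) mod N) ^ 4) = S" if "k < N" for k
      unfolding S_def using that by (rule sum_cyclic_shift)
    then show ?thesis by simp
  qed
  also have "\<dots> = S ^ 3"
    by (simp add: S_def sum_distrib_right[symmetric] power3_eq_cube)
  finally show ?thesis by (simp add: S_def)
qed

text \<open>The library's powr_power excludes the base 0, which is harmless for positive n.\<close>
lemma powr_power_nat: "0 \<le> (x::real) \<Longrightarrow> n \<noteq> 0 \<Longrightarrow> (x powr u) ^ n = x powr (real n * u)"
  by (cases "x = 0") (simp_all add: powr_power)

lemma cconv_energy_bound:
  fixes z :: "nat \<Rightarrow> complex"
  shows "(\<Sum>m<N. (cmod (cconv N z m))\<^sup>2) \<le> (\<Sum>k<N. cmod (z k) powr (4/3)) ^ 3"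
proof -
  define t where "t k = cmod (z k) powr (1/3)" for k
  have t0: "\<And>k. 0 \<le> t k" by (simp add: t_def)
  have t3: "t k ^ 3 = cmod (z k)" for k by (simp add: t_def powr_power_nat)
  have t4: "t k ^ 4 = cmod (z k) powr (4/3)" for k by (simp add: t_def powr_power_nat)
  have "cmod (cconv N z m) \<le> (\<Sum>k<N. t k ^ 3 * t ((m + N - k) mod N) ^ 3)" for m
    unfolding cconv_def t3 norm_mult[symmetric] by (rule norm_sum)
  then have "(\<Sum>m<N. (cmod (cconv N z m))\<^sup>2) \<le> (\<Sum>m<N. (\<Sum>k<N. t k ^ 3 * t ((m + N - k) mod N) ^ 3)\<^sup>2)"
    by (intro sum_mono power_mono) auto
  also have "\<dots> \<le> (\<Sum>k<N. cmod (z k) powr (4/3)) ^ 3"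
    using cyclic_young_cubes[OF t0, where N=N] by (simp add: t4)
  finally show ?thesis .
qed

text \<open>A crude Jordan-type inequality from the cubic Taylor remainder of sin.\<close>
lemma sin_ge_third:
  fixes x :: real
  assumes x: "0 \<le> x" "x \<le> 2"
  shows "x / 3 \<le> sin x"
proof -
  have "\<bar>sin x - (\<Sum>m<3. sin_coeff m * x ^ m)\<bar> \<le> inverse (fact 3) * \<bar>x\<bar> ^ 3"
    by (rule Maclaurin_sin_bound)
  moreover have "(\<Sum>m<3. sin_coeff m * x ^ m) = x"
    by (simp add: numeral_3_eq_3 sin_coeff_Suc cos_coeff_Suc)
  moreover have "inverse (fact 3) * \<bar>x\<bar> ^ 3 = x ^ 3 / 6"
    using x by (simp add: fact_numeral)
  moreover have "x ^ 3 / 6 \<le> 2 * x / 3"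
  proof -
    have "x\<^sup>2 \<le> 2\<^sup>2" using x by (intro power_mono) auto
    then have "x * x\<^sup>2 \<le> x * 4" using x by (intro mult_left_mono) auto
    then show ?thesis by (simp add: power3_eq_cube power2_eq_square)
  qed
  ultimately show ?thesis by linarith
qed

text \<open>Spectral gap: for 1 \<le> k \<le> N/2 the eigenvalues grow quadratically in k,
  uniformly in N, since sin(k pi/N) / sin(pi/N) \<ge> k/3.\<close>
lemma lam_lower_bound:
  assumes mu: "\<mu> > 1" and N: "2 \<le> N" and k1: "1 \<le> k" and k2: "2 * k \<le> N"
  shows "(\<mu> - 1) * (real k)\<^sup>2 / 9 \<le> lam (\<mu> * gamma1 N) N k"
proof -
  define x where "x = pi / real N"
  define y where "y = real k * pi / real N"
  have xpos: "0 < x" using N by (simp add: x_def)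
  have yx: "y = real k * x" by (simp add: x_def y_def)
  have xy: "x \<le> y" using k1 xpos yx by (simp add: mult_le_cancel_right1)
  have ypi: "y \<le> pi / 2"
  proof -
    have "2 * real k * pi \<le> real N * pi" using k2 by (intro mult_right_mono) auto
    then show ?thesis using N by (simp add: y_def field_simps)
  qed
  have sx: "0 < sin x" using xpos xy ypi by (intro sin_gt_zero) auto
  have sxy: "sin x \<le> sin y" using xpos xy ypi by (intro sin_monotone_2pi_le) auto
  define R where "R = (sin y)\<^sup>2 / (sin x)\<^sup>2"
  have lam: "lam (\<mu> * gamma1 N) N k = \<mu> * R - 1"
    by (simp add: lam_def gamma1_def R_def y_def x_def)
  have R1: "1 \<le> R" unfolding R_def using sx sxy by (simp add: power_mono)
  have R2: "(real k)\<^sup>2 / 9 \<le> R"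
  proof -
    have "(y / 3)\<^sup>2 \<le> (sin y)\<^sup>2"
      using sin_ge_third[of y] xpos xy ypi pi_less_4 by (intro power_mono) auto
    moreover have "(sin x)\<^sup>2 \<le> x\<^sup>2" using sin_x_le_x[of x] xpos sx by (intro power_mono) auto
    ultimately have "(y / 3)\<^sup>2 / x\<^sup>2 \<le> R"
      unfolding R_def using sx xpos by (intro frac_le) auto
    moreover have "(y / 3)\<^sup>2 / x\<^sup>2 = (real k)\<^sup>2 / 9"
      using xpos yx by (simp add: field_simps power2_eq_square)
    ultimately show ?thesis by simp
  qed
  have "(\<mu> - 1) * ((real k)\<^sup>2 / 9) \<le> (\<mu> - 1) * R" using mu R2 by (intro mult_left_mono) auto
  moreover have "(\<mu> - 1) * R = \<mu> * R - R" by (simp add: algebra_simps)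
  ultimately show ?thesis using lam R1 by simp
qed

lemma lam_reflect: "k < N \<Longrightarrow> lam g N (N - k) = lam g N k"
proof -
  assume k: "k < N"
  have "real (N - k) * pi / real N = pi - real k * pi / real N"
    using k by (simp add: field_simps of_nat_diff)
  then show ?thesis by (simp add: lam_def)
qed

lemma weight_powr_bound:
  assumes mu: "\<mu> > 1" and N: "2 \<le> N" and k1: "1 \<le> k" and k2: "2 * k \<le> N" and r: "0 \<le> r"
  shows "(r / sqrt \<bar>lam (\<mu> * gamma1 N) N k\<bar>) powr (4/3)
       \<le> (3 / sqrt (\<mu> - 1)) powr (4/3) * (r / real k) powr (4/3)"
proof -
  have pos: "0 < sqrt (\<mu> - 1) * real k / 3" using mu k1 by auto
  have "sqrt ((\<mu> - 1) * (real k)\<^sup>2 / 9) = sqrt (\<mu> - 1) * real k / 3"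
    using mu by (simp add: real_sqrt_mult real_sqrt_divide)
  then have sq: "sqrt (\<mu> - 1) * real k / 3 \<le> sqrt \<bar>lam (\<mu> * gamma1 N) N k\<bar>"
    using lam_lower_bound[OF mu N k1 k2] real_sqrt_le_mono by (metis abs_ge_self order_trans)
  have lp: "0 < sqrt \<bar>lam (\<mu> * gamma1 N) N k\<bar>" using pos sq by linarith
  have "r / sqrt \<bar>lam (\<mu> * gamma1 N) N k\<bar> \<le> r / (sqrt (\<mu> - 1) * real k / 3)"
    using sq pos r lp by (intro divide_left_mono) auto
  also have "\<dots> = (3 / sqrt (\<mu> - 1)) * (r / real k)" by (simp add: field_simps)
  finally show ?thesis
    using r pos sq by (simp only: powr_mult[symmetric]) (intro powr_mono2, auto)
qed

definition weight_bound :: "real \<Rightarrow> (nat \<Rightarrow> real) \<Rightarrow> real" where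
  "weight_bound \<mu> \<rho> = 1 + 2 * (3 / sqrt (\<mu> - 1)) powr (4/3)
                          * (\<Sum>k. (\<rho> (Suc k) / real (Suc k)) powr (4/3))"

text \<open>Each weight with 1 \<le> k < N is controlled by the term of K_(4/3) at k or at N - k,
  whichever lies in the first half of the spectrum.\<close>
lemma weight_term_bound:
  assumes mu: "\<mu> > 1" and N: "2 \<le> N" and rpos: "\<And>k. 1 \<le> k \<Longrightarrow> \<rho> k > 0"
    and k: "1 \<le> k" "k < N"
  shows "(rr \<rho> N k / sqrt \<bar>lam (\<mu> * gamma1 N) N k\<bar>) powr (4/3)
       \<le> (3 / sqrt (\<mu> - 1)) powr (4/3)
           * ((\<rho> k / real k) powr (4/3) + (\<rho> (N - k) / real (N - k)) powr (4/3))"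
proof (cases "2 * k \<le> N")
  case True
  then have "rr \<rho> N k = \<rho> k" using k by (simp add: rr_def) linarith
  then have "(rr \<rho> N k / sqrt \<bar>lam (\<mu> * gamma1 N) N k\<bar>) powr (4/3)
      \<le> (3 / sqrt (\<mu> - 1)) powr (4/3) * (\<rho> k / real k) powr (4/3)"
    using weight_powr_bound[OF mu N k(1) True] rpos[OF k(1)] by simp
  then show ?thesis by (smt (verit) powr_ge_zero distrib_left mult_nonneg_nonneg)
next
  case False
  have k': "1 \<le> N - k" "2 * (N - k) \<le> N" using k False by auto
  have "rr \<rho> N k = \<rho> (N - k)" using k False by (simp add: rr_def) linarith
  moreover have "lam (\<mu> * gamma1 N) N k = lam (\<mu> * gamma1 N) N (N - k)"
    using lam_reflect[OF k(2)] by simp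
  ultimately have "(rr \<rho> N k / sqrt \<bar>lam (\<mu> * gamma1 N) N k\<bar>) powr (4/3)
      \<le> (3 / sqrt (\<mu> - 1)) powr (4/3) * (\<rho> (N - k) / real (N - k)) powr (4/3)"
    using weight_powr_bound[OF mu N k'] rpos[OF k'(1)] by simp
  then show ?thesis by (smt (verit) powr_ge_zero distrib_left mult_nonneg_nonneg)
qed

text \<open>Summing the previous bound, each term of K_(4/3) is used at most twice, and the
  mode k = 0 (where r_0 = 1 and lambda_0 = -1) contributes exactly 1.\<close>
lemma weight_sum_bound:
  assumes mu: "\<mu> > 1" and N: "2 \<le> N" and rpos: "\<And>k. 1 \<le> k \<Longrightarrow> \<rho> k > 0"
    and sm: "summable (\<lambda>k. (\<rho> (Suc k) / real (Suc k)) powr (4/3))"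
  shows "(\<Sum>k<N. (rr \<rho> N k / sqrt \<bar>lam (\<mu> * gamma1 N) N k\<bar>) powr (4/3)) \<le> weight_bound \<mu> \<rho>"
proof -
  define C where "C = (3 / sqrt (\<mu> - 1)) powr (4/3)"
  define f where "f k = (\<rho> (Suc k) / real (Suc k)) powr (4/3)" for k
  define b where "b k = (rr \<rho> N k / sqrt \<bar>lam (\<mu> * gamma1 N) N k\<bar>) powr (4/3)" for k
  obtain n where n: "N = Suc n" using N by (cases N) auto
  have b0: "b 0 = 1" by (simp add: b_def rr_def lam_def)
  have bi: "b (Suc i) \<le> C * (f i + f (n - Suc i))" if "i < n" for i
    using weight_term_bound[OF mu N rpos, where k="Suc i"] that n
    by (simp add: b_def C_def f_def Suc_diff_Suc)
  have "(\<Sum>k<N. b k) = b 0 + (\<Sum>i<n. b (Suc i))"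
    unfolding n by (rule sum.lessThan_Suc_shift)
  also have "\<dots> \<le> 1 + (\<Sum>i<n. C * (f i + f (n - Suc i)))"
    using b0 bi sum_mono[of "{..<n}" "\<lambda>i. b (Suc i)" "\<lambda>i. C * (f i + f (n - Suc i))"] by simp
  also have "\<dots> = 1 + C * ((\<Sum>i<n. f i) + (\<Sum>i<n. f (n - Suc i)))"
    by (simp only: sum.distrib sum_distrib_left distrib_left)
  also have "\<dots> = 1 + 2 * C * (\<Sum>i<n. f i)"
    by (simp add: sum.nat_diff_reindex)
  also have "\<dots> \<le> 1 + 2 * C * (\<Sum>k. f k)"
    using sm by (intro add_left_mono mult_left_mono sum_le_suminf) (auto simp: f_def C_def)
  finally show ?thesis by (simp add: b_def weight_bound_def C_def f_def)
qed

lemma Cdelta_powr_sum_bound: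
  assumes mu: "\<mu> > 1" and N: "2 \<le> N" and rpos: "\<And>k. 1 \<le> k \<Longrightarrow> \<rho> k > 0"
    and sm: "summable (\<lambda>k. (\<rho> (Suc k) / real (Suc k)) powr (4/3))"
    and d: "0 < \<delta>" and z: "z \<in> Cdelta (\<mu> * gamma1 N) \<rho> N \<delta>"
  shows "(\<Sum>k<N. cmod (z k) powr (4/3)) \<le> \<delta> powr (4/3) * weight_bound \<mu> \<rho>"
proof -
  define b where "b k = rr \<rho> N k / sqrt \<bar>lam (\<mu> * gamma1 N) N k\<bar>" for k
  have "cmod (z k) powr (4/3) \<le> \<delta> powr (4/3) * b k powr (4/3)" if k: "k < N" for k
  proof -
    have "0 < \<rho> (N - k)" using k by (intro rpos) simp
    then have "0 \<le> rr \<rho> N k" unfolding rr_def using rpos[of k] by (auto intro: less_imp_le)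
    moreover have "cmod (z k) \<le> \<delta> * b k" using z k by (simp add: Cdelta_def b_def)
    ultimately show ?thesis using d by (simp add: b_def powr_mono2 flip: powr_mult)
  qed
  then have "(\<Sum>k<N. cmod (z k) powr (4/3)) \<le> (\<Sum>k<N. \<delta> powr (4/3) * b k powr (4/3))"
    by (intro sum_mono) simp
  also have "\<dots> = \<delta> powr (4/3) * (\<Sum>k<N. b k powr (4/3))"
    by (rule sum_distrib_left[symmetric])
  also have "\<dots> \<le> \<delta> powr (4/3) * weight_bound \<mu> \<rho>"
    using weight_sum_bound[OF mu N rpos sm] by (simp add: b_def mult_left_mono)
  finally show ?thesis .
qed

theorem lemma4p5:
  fixes \<mu> :: real and \<rho> :: "nat \<Rightarrow> real"
  assumes "\<mu> > 1"
    and "\<And>k. k \<ge> 1 \<Longrightarrow> \<rho> k > 0"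
    and "\<And>k l. 1 \<le> k \<Longrightarrow> k \<le> l \<Longrightarrow> \<rho> k \<le> \<rho> l"
    and "summable (\<lambda>k. (\<rho> (Suc k) / real (Suc k)) powr (4/3))"
  shows "\<exists>A1 \<delta>0. \<delta>0 > 0 \<and> (\<forall>N \<ge> 3. \<forall>\<delta>. 0 < \<delta> \<and> \<delta> < \<delta>0 \<longrightarrow>
           (\<forall>z \<in> Cdelta (\<mu> * gamma1 N) \<rho> N \<delta>.
              \<bar>Gtilde (\<mu> * gamma1 N) N z - F0 (\<mu> * gamma1 N) N z\<bar> \<le> A1 * \<delta> ^ 4))"
proof -
  define B where "B = weight_bound \<mu> \<rho>"
  have "\<bar>Gtilde (\<mu> * gamma1 N) N z - F0 (\<mu> * gamma1 N) N z\<bar> \<le> B ^ 3 / 4 * \<delta> ^ 4"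
    if N: "N \<ge> 3" and d: "0 < \<delta>" and z: "z \<in> Cdelta (\<mu> * gamma1 N) \<rho> N \<delta>" for N \<delta> z
  proof -
    have "z \<in> hatR N" using z by (simp add: Cdelta_def)
    then have "Gtilde (\<mu> * gamma1 N) N z - F0 (\<mu> * gamma1 N) N z = (\<Sum>m<N. (cmod (cconv N z m))\<^sup>2) / 4"
      using N by (intro Gtilde_minus_F0) auto
    then have "\<bar>Gtilde (\<mu> * gamma1 N) N z - F0 (\<mu> * gamma1 N) N z\<bar> = (\<Sum>m<N. (cmod (cconv N z m))\<^sup>2) / 4"
      by (simp only: abs_of_nonneg sum_nonneg divide_nonneg_pos zero_le_power2 zero_less_numeral)
    also have "\<dots> \<le> (\<Sum>k<N. cmod (z k) powr (4/3)) ^ 3 / 4"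
      using cconv_energy_bound by (rule divide_right_mono) simp
    also have "\<dots> \<le> (\<delta> powr (4/3) * B) ^ 3 / 4"
      using Cdelta_powr_sum_bound[OF assms(1) _ assms(2) assms(4) d z] N
      by (intro divide_right_mono power_mono) (auto simp: B_def intro: sum_nonneg)
    also have "\<dots> = B ^ 3 / 4 * \<delta> ^ 4"
      using d by (simp add: power_mult_distrib powr_power_nat powr_realpow)
    finally show ?thesis .
  qed
  then show ?thesis by (intro exI[of _ "B ^ 3 / 4"] exI[of _ 1]) auto
qed

end
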